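(* Fix $c>0$, a class index $k$, an input $x\in\mathbb{R}^d$, and patch matrices $D_1,\dots,D_J\in\mathbb{R}^{p\times d}$ such that $y^{(j)}=D_jx\neq 0$ for all $j$. Let $(w^{(i)})_{i\ge 1}$ be i.i.d. $\mathcal{N}(0,c^2I_p)$ vectors and $(V_{(i-1)J+j,k})_{i\ge1,\,1\le j\le J}$ i.i.d. $\mathcal{N}(0,c^2)$ scalars, all mutually independent; the network with $N$ filters uses $w^{(1)},\dots,w^{(N)}$ and $V_{q_{ij},k}$ for $i\le N$. For a fixed constant $\tilde Z>0$, let the GBP visualization of the $k$-th logit of the $N$-filter network be $$s^{\mathrm{GBP},N}_k(x)=\frac{1}{\tilde Z N}\sum_{j=1}^{J}D_j^T\sum_{i=1}^{N}\sigma\big(V_{q_{ij},k}\big)\,w^{(i)}\,\mathbb{I}\big(w^{(i)T}y^{(j)}\big).$$ Then, almost surely as $N\to\infty$, $$s^{\mathrm{GBP},N}_k(x)\longrightarrow \frac{c^2}{2\pi\tilde Z}\sum_{j=1}^{J}\frac{D_j^Ty^{(j)}}{\|y^{(j)}\|_2}.$$ In particular, if in addition $\|y^{(j)}\|_2=C_0$ for all $j$ (for some constant $C_0>0$) and $\sum_{j=1}^JD_j^TD_j=pI_d$, then the limit equals $\frac{c^2p}{2\pi C_0\tilde Z}\,x$, which equals $x$ when $\tilde Z=\frac{c^2p}{2\pi C_0}$ (independently of $k$).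
   Context: $\sigma(t)=\max(t,0)$; $\mathbb{I}(t)=1$ if $t>0$ and $0$ otherwise; $q_{ij}=(i-1)J+j$. The patch-extraction matrices are $D_j=\begin{bmatrix}0_{p\times (j-1)b} & I_{p\times p} & 0_{p\times(d-(j-1)b-p)}\end{bmatrix}$ for a stride $b$, and $y^{(j)}=D_jx$. The displayed formula is the guided-backpropagation visualization (modified gradient in which both the forward ReLU mask $\mathbb{I}(w^{(i)T}y^{(j)})$ and the backward ReLU on the top gradient $V_{q_{ij},k}$ are applied) of the logit $f_k(x)=\sum_{i=1}^{N}\sum_{j=1}^{J}V_{q_{ij},k}\,\sigma(w^{(i)T}y^{(j)})$ of a random three-layer CNN, with normalization $Z_k=\tilde ZN$. *)

theory Defs
  imports "HOL-Probability.Probability"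
begin

definition relu :: "real \<Rightarrow> real" where
  "relu t = max t 0"

definition ind :: "real \<Rightarrow> real" where
  "ind t = (if t > 0 then 1 else 0)"

text \<open>q_{ij} = (i-1)J + j (indices i, j start at 1).\<close>
definition qidx :: "nat \<Rightarrow> nat \<Rightarrow> nat \<Rightarrow> nat" where
  "qidx J i j = (i - 1) * J + j"

definition sGBP ::
  "real \<Rightarrow> nat \<Rightarrow> (nat \<Rightarrow> real^'d^'p) \<Rightarrow> (nat \<Rightarrow> real^'p) \<Rightarrow> (nat \<Rightarrow> nat \<Rightarrow> real)
     \<Rightarrow> nat \<Rightarrow> nat \<Rightarrow> real^'d \<Rightarrow> real^'d" where
  "sGBP Zt J D w V k N x =
     (1 / (Zt * real N)) *\<^sub>R
       (\<Sum>j=1..J. transpose (D j) *v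
          (\<Sum>i=1..N. (relu (V (qidx J i j) k) * ind (w i \<bullet> (D j *v x))) *\<^sub>R w i))"

end

(*
  Fix a patch y = D_j x \<noteq> 0. The i-th summand of the GBP average for this patch is
  relu (V_q) * ind (w \<bullet> y) * w, with V_q and w independent. Its expectation factorises:
  E relu (V_q) = c / sqrt (2 pi), and splitting w \<bullet> y = y_l w_l + R with R an independent
  centred normal, a Gaussian integral gives E [ind (w \<bullet> y) w_l] = c y_l / (|y| sqrt (2 pi)).
  The summands for different filters i depend on disjoint blocks of the independent weights,
  so they are pairwise independent with bounded second moments, and a strong law of large
  numbers (Chebyshev along the squares N = n^2, Borel-Cantelli, and monotone interpolation
  for nonnegative parts) gives almost sure convergence of the average to
  c^2 / (2 pi |y|) * y. Summing D_j^T of these limits over the finitely many patches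
  gives the limit; the special case is then linear algebra.
*)

theory Submission
  imports Defs "HOL-Real_Asymp.Real_Asymp" "HOL-Library.Discrete_Functions"
begin

lemma ind_measurable [measurable]: "ind \<in> borel_measurable borel"
  unfolding ind_def by measurable

lemma relu_measurable [measurable]: "relu \<in> borel_measurable borel"
  unfolding relu_def by measurable

lemma normal_density_minus [simp]: "normal_density 0 \<sigma> (- x) = normal_density 0 \<sigma> x"
  by (simp add: normal_density_def)

lemma normal_density_divide:
  assumes "a \<noteq> 0" "\<sigma> > 0"
  shows "normal_density 0 \<sigma> (r / a) = \<bar>a\<bar> * normal_density 0 (\<sigma> * \<bar>a\<bar>) r"
proof -
  have "sqrt (2 * pi * (\<sigma> * \<bar>a\<bar>)\<^sup>2) = sqrt (2 * pi * \<sigma>\<^sup>2) * \<bar>a\<bar>"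
    by (simp add: power_mult_distrib real_sqrt_mult)
  moreover have "(r / a)\<^sup>2 / (2 * \<sigma>\<^sup>2) = r\<^sup>2 / (2 * (\<sigma> * \<bar>a\<bar>)\<^sup>2)"
    using assms by (simp add: power_mult_distrib power_divide field_simps)
  ultimately show ?thesis
    using assms unfolding normal_density_def by (simp add: field_simps)
qed

lemma has_real_derivative_normal_density:
  assumes "\<sigma> > 0"
  shows "((\<lambda>s. - (\<sigma>\<^sup>2 * normal_density 0 \<sigma> s)) has_real_derivative s * normal_density 0 \<sigma> s) (at s)"
  unfolding normal_density_def
  apply (insert assms)
  apply (rule derivative_eq_intros refl | simp)+
  apply (simp add: field_simps power2_eq_square power4_eq_xxxx)
  done

lemma normal_first_moment_tail:
  assumes \<sigma>: "\<sigma> > 0"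
  shows "set_integrable lborel {t<..} (\<lambda>s. s * normal_density 0 \<sigma> s)"
    and "(LINT s:{t<..}|lborel. s * normal_density 0 \<sigma> s) = \<sigma>\<^sup>2 * normal_density 0 \<sigma> t"
proof -
  let ?F = "\<lambda>s. - (\<sigma>\<^sup>2 * normal_density 0 \<sigma> s)"
  have "integrable lborel (\<lambda>s. s * normal_density 0 \<sigma> s)"
    using integrable_normal_moment_nz_1[OF \<sigma>, of 0] by (simp add: mult.commute)
  then show int: "set_integrable lborel {t<..} (\<lambda>s. s * normal_density 0 \<sigma> s)"
    unfolding set_integrable_def by (rule integrable_mult_indicator[rotated]) auto
  have F_top: "(?F \<longlongrightarrow> 0) at_top"
    unfolding normal_density_def using \<sigma> by real_asymp
  have "(LBINT s=ereal t..\<infinity>. s * normal_density 0 \<sigma> s) = 0 - ?F t"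
  proof (rule interval_integral_FTC_integrable)
    show "(?F has_vector_derivative s * normal_density 0 \<sigma> s) (at s)" for s
      using has_real_derivative_normal_density[OF \<sigma>]
      by (simp add: has_real_derivative_iff_has_vector_derivative)
    show "isCont (\<lambda>s. s * normal_density 0 \<sigma> s) s" for s
      unfolding normal_density_def using \<sigma> by (intro continuous_intros) auto
    show "set_integrable lborel (einterval (ereal t) \<infinity>) (\<lambda>s. s * normal_density 0 \<sigma> s)"
      using int by (simp add: einterval_def greaterThan_def)
    show "((?F \<circ> real_of_ereal) \<longlongrightarrow> ?F t) (at_right (ereal t))"
      unfolding ereal_tendsto_simps normal_density_def
      using \<sigma> by (intro tendsto_intros continuous_intros) (auto simp: power2_eq_square)
    show "((?F \<circ> real_of_ereal) \<longlongrightarrow> 0) (at_left \<infinity>)"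
      unfolding ereal_tendsto_simps using F_top .
  qed simp
  then show "(LINT s:{t<..}|lborel. s * normal_density 0 \<sigma> s) = \<sigma>\<^sup>2 * normal_density 0 \<sigma> t"
    by (simp add: interval_integral_to_infinity_eq)
qed

lemma normal_first_moment_halfspace_pos:
  assumes \<sigma>: "\<sigma> > 0" and a: "a > 0"
  shows "integrable lborel (\<lambda>s. ind (a * s + r) * s * normal_density 0 \<sigma> s)"
    and "(\<integral>s. ind (a * s + r) * s * normal_density 0 \<sigma> s \<partial>lborel)
           = a * \<sigma>\<^sup>2 * normal_density 0 (\<sigma> * a) r"
proof -
  have eq: "(\<lambda>s. ind (a * s + r) * s * normal_density 0 \<sigma> s)
      = (\<lambda>s. indicator {-r/a<..} s * (s * normal_density 0 \<sigma> s))"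
  proof
    fix s
    have "a * s + r > 0 \<longleftrightarrow> s > -r/a"
      using a by (auto simp: field_simps)
    then show "ind (a * s + r) * s * normal_density 0 \<sigma> s
        = indicator {-r/a<..} s * (s * normal_density 0 \<sigma> s)"
      by (auto simp: ind_def indicator_def)
  qed
  show "integrable lborel (\<lambda>s. ind (a * s + r) * s * normal_density 0 \<sigma> s)"
    using normal_first_moment_tail(1)[OF \<sigma>, of "-r/a"] unfolding eq set_integrable_def by simp
  have "(\<integral>s. ind (a * s + r) * s * normal_density 0 \<sigma> s \<partial>lborel) = \<sigma>\<^sup>2 * normal_density 0 \<sigma> (r / a)"
    using normal_first_moment_tail(2)[OF \<sigma>, of "-r/a"] unfolding eq set_lebesgue_integral_def by simp
  also have "\<dots> = a * \<sigma>\<^sup>2 * normal_density 0 (\<sigma> * a) r"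
    using normal_density_divide[of a \<sigma> r] a \<sigma> by simp
  finally show "(\<integral>s. ind (a * s + r) * s * normal_density 0 \<sigma> s \<partial>lborel)
      = a * \<sigma>\<^sup>2 * normal_density 0 (\<sigma> * a) r" .
qed

lemma normal_first_moment_halfspace:
  assumes \<sigma>: "\<sigma> > 0"
  shows "integrable lborel (\<lambda>s. ind (a * s + r) * s * normal_density 0 \<sigma> s)"
    and "(\<integral>s. ind (a * s + r) * s * normal_density 0 \<sigma> s \<partial>lborel)
           = a * \<sigma>\<^sup>2 * normal_density 0 (\<sigma> * \<bar>a\<bar>) r"
proof -
  let ?f = "\<lambda>a s. ind (a * s + r) * s * normal_density 0 \<sigma> s"
  consider "a > 0" | "a < 0" | "a = 0" by linarith
  then have "integrable lborel (?f a) \<and> integral\<^sup>L lborel (?f a) = a * \<sigma>\<^sup>2 * normal_density 0 (\<sigma> * \<bar>a\<bar>) r"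
  proof cases
    case 1
    then show ?thesis using normal_first_moment_halfspace_pos[OF \<sigma> 1] by simp
  next
    case 2
    \<comment> \<open>reflect \<open>s \<mapsto> -s\<close> to reduce to a positive slope\<close>
    have refl: "(\<lambda>s. ?f a (0 + -1 * s)) = (\<lambda>s. - ?f (-a) s)"
      by (auto simp: fun_eq_iff)
    have "integrable lborel (\<lambda>s. ?f a (0 + -1 * s))"
      unfolding refl using normal_first_moment_halfspace_pos(1)[of \<sigma> "-a"] \<sigma> 2 by simp
    then have "integrable lborel (?f a)"
      using lborel_integrable_real_affine_iff[of "-1" "?f a" 0] by simp
    moreover have "integral\<^sup>L lborel (?f a) = integral\<^sup>L lborel (\<lambda>s. ?f a (0 + -1 * s))"
      using lborel_integral_real_affine[of "-1" "?f a" 0] by simp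
    ultimately show ?thesis
      unfolding refl using normal_first_moment_halfspace_pos(2)[of \<sigma> "-a"] \<sigma> 2 by simp
  next
    case 3
    then have "?f a = (\<lambda>s. ind r * (normal_density 0 \<sigma> s * s))"
      by (auto simp: fun_eq_iff)
    then show ?thesis
      using 3 integrable_normal_moment_nz_1[OF \<sigma>, of 0] integral_normal_moment_nz_1[OF \<sigma>, of 0]
      by (simp add: mult.left_commute[of _ "ind r"])
  qed
  then show "integrable lborel (?f a)"
    and "integral\<^sup>L lborel (?f a) = a * \<sigma>\<^sup>2 * normal_density 0 (\<sigma> * \<bar>a\<bar>) r"
    by auto
qed

lemma has_bochner_integral_normal_density_mult:
  assumes \<rho>: "\<rho> > 0" and \<tau>: "\<tau> > 0"
  shows "has_bochner_integral lborel (\<lambda>x. normal_density 0 \<tau> x * normal_density 0 \<rho> x)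
           (1 / sqrt (2 * pi * (\<tau>\<^sup>2 + \<rho>\<^sup>2)))"
proof (rule has_bochner_integral_nn_integral)
  \<comment> \<open>the integral is the value at \<open>0\<close> of a convolution of two centred normal densities\<close>
  have "(\<integral>\<^sup>+y. ennreal (normal_density 0 \<rho> (0 - y) * normal_density 0 \<tau> y) \<partial>lborel)
      = normal_density 0 (sqrt (\<rho>\<^sup>2 + \<tau>\<^sup>2)) 0"
    using fun_cong[OF conv_normal_density_zero_mean[OF \<rho> \<tau>], of 0] by simp
  moreover have "normal_density 0 (sqrt (\<rho>\<^sup>2 + \<tau>\<^sup>2)) 0 = 1 / sqrt (2 * pi * (\<tau>\<^sup>2 + \<rho>\<^sup>2))"
    using \<rho> \<tau> by (simp add: normal_density_def add.commute)
  ultimately show "(\<integral>\<^sup>+x. ennreal (normal_density 0 \<tau> x * normal_density 0 \<rho> x) \<partial>lborel)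
      = ennreal (1 / sqrt (2 * pi * (\<tau>\<^sup>2 + \<rho>\<^sup>2)))"
    by (simp add: mult.commute)
qed auto

lemma normal_pair_first_moment_halfspace:
  fixes a :: real
  assumes \<sigma>: "\<sigma> > 0" and \<tau>: "\<tau> > 0"
  defines "f \<equiv> \<lambda>(s, r). normal_density 0 \<sigma> s * normal_density 0 \<tau> r * (ind (a * s + r) * s)"
  shows "integrable (lborel \<Otimes>\<^sub>M lborel) f"
    and "integral\<^sup>L (lborel \<Otimes>\<^sub>M lborel) f = a * \<sigma>\<^sup>2 / sqrt (2 * pi * (\<tau>\<^sup>2 + \<sigma>\<^sup>2 * a\<^sup>2))"
proof -
  let ?h = "\<lambda>(s::real, r::real). \<bar>s\<bar> * normal_density 0 \<sigma> s * normal_density 0 \<tau> r"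
  have "integrable (lborel \<Otimes>\<^sub>M lborel) ?h"
  proof (rule lborel_pair.Fubini_integrable)
    have "(\<lambda>s. \<integral>r. norm (?h (s, r)) \<partial>lborel) = (\<lambda>s. normal_density 0 \<sigma> s * \<bar>s - 0\<bar> ^ 1)"
      by (auto simp: fun_eq_iff abs_mult integral_normal_density[OF \<tau>])
    then show "integrable lborel (\<lambda>s. \<integral>r. norm (?h (s, r)) \<partial>lborel)"
      by (simp only: integrable_normal_moment_abs[OF \<sigma>])
    show "AE s in lborel. integrable lborel (\<lambda>r. ?h (s, r))"
      using integrable_normal_density[OF \<tau>] by auto
  qed simp
  then show int: "integrable (lborel \<Otimes>\<^sub>M lborel) f"
    by (rule Bochner_Integration.integrable_bound) (auto simp: f_def ind_def abs_mult)
  have "integral\<^sup>L (lborel \<Otimes>\<^sub>M lborel) f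
      = (\<integral>r. (\<integral>s. normal_density 0 \<tau> r * (ind (a * s + r) * s * normal_density 0 \<sigma> s) \<partial>lborel) \<partial>lborel)"
    using lborel_pair.integral_snd[OF int[unfolded f_def]] by (simp add: f_def mult_ac)
  also have "\<dots> = (\<integral>r. a * \<sigma>\<^sup>2 * (normal_density 0 \<tau> r * normal_density 0 (\<sigma> * \<bar>a\<bar>) r) \<partial>lborel)"
    by (intro Bochner_Integration.integral_cong refl)
      (simp only: integral_mult_right_zero normal_first_moment_halfspace(2)[OF \<sigma>], simp)
  also have "\<dots> = a * \<sigma>\<^sup>2 / sqrt (2 * pi * (\<tau>\<^sup>2 + \<sigma>\<^sup>2 * a\<^sup>2))"
  proof (cases "a = 0")
    case False
    then have "\<sigma> * \<bar>a\<bar> > 0" using \<sigma> by simp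
    from has_bochner_integral_integral_eq[OF has_bochner_integral_normal_density_mult[OF this \<tau>]]
    show ?thesis by (simp add: power_mult_distrib)
  qed simp
  finally show "integral\<^sup>L (lborel \<Otimes>\<^sub>M lborel) f = a * \<sigma>\<^sup>2 / sqrt (2 * pi * (\<tau>\<^sup>2 + \<sigma>\<^sup>2 * a\<^sup>2))" .
qed

lemma averages_tendsto_of_square_averages:
  fixes a :: "nat \<Rightarrow> real"
  assumes nonneg: "\<And>i. 0 \<le> a i"
    and lim: "(\<lambda>n. (\<Sum>i<(Suc n)\<^sup>2. a i) / real ((Suc n)\<^sup>2)) \<longlonglongrightarrow> \<mu>"
  shows "(\<lambda>N. (\<Sum>i<N. a i) / real N) \<longlonglongrightarrow> \<mu>"
proof -
  define T where "T N = (\<Sum>i<N. a i)" for N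
  define u where "u n = T ((Suc n)\<^sup>2) / real ((Suc n)\<^sup>2)" for n
  define s where "s N = floor_sqrt N" for N
  have T_mono: "T m \<le> T n" if "m \<le> n" for m n
    unfolding T_def using that nonneg by (intro sum_mono2) auto
  have s_minus_top: "filterlim (\<lambda>N. s N - 1) at_top sequentially"
    unfolding filterlim_at_top eventually_sequentially
  proof
    fix Z
    have "Z \<le> s N - 1" if "(Suc Z)\<^sup>2 \<le> N" for N
      using le_floor_sqrtI[OF that] by (simp add: s_def)
    then show "\<exists>N0. \<forall>N\<ge>N0. Z \<le> s N - 1" by blast
  qed
  then have s_top: "filterlim s at_top sequentially"
    by (rule filterlim_at_top_mono) auto
  have u: "u \<longlonglongrightarrow> \<mu>"
    using lim unfolding u_def[abs_def] T_def .
  have "(\<lambda>n. real (n\<^sup>2) / real ((Suc n)\<^sup>2)) \<longlonglongrightarrow> 1"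
    by real_asymp
  from tendsto_mult[OF filterlim_compose[OF u s_minus_top] filterlim_compose[OF this s_top]]
  have lower: "(\<lambda>N. u (s N - 1) * (real ((s N)\<^sup>2) / real ((Suc (s N))\<^sup>2))) \<longlonglongrightarrow> \<mu>"
    by (simp only: mult_1_right)
  have "(\<lambda>n. real ((Suc n)\<^sup>2) / real (n\<^sup>2)) \<longlonglongrightarrow> 1"
    by real_asymp
  from tendsto_mult[OF filterlim_compose[OF u s_top] filterlim_compose[OF this s_top]]
  have upper: "(\<lambda>N. u (s N) * (real ((Suc (s N))\<^sup>2) / real ((s N)\<^sup>2))) \<longlonglongrightarrow> \<mu>"
    by (simp only: mult_1_right)
  \<comment> \<open>with \<open>n\<^sup>2 \<le> N < (n + 1)\<^sup>2\<close>, monotonicity of \<open>T\<close> squeezes \<open>T N / N\<close>\<close>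
  have "u (s N - 1) * (real ((s N)\<^sup>2) / real ((Suc (s N))\<^sup>2)) \<le> T N / real N
      \<and> T N / real N \<le> u (s N) * (real ((Suc (s N))\<^sup>2) / real ((s N)\<^sup>2))" if "N \<ge> 1" for N
  proof -
    define n where "n = s N"
    have n: "n \<ge> 1" "n\<^sup>2 \<le> N" "N < (Suc n)\<^sup>2"
      using that Suc_floor_sqrt_power2_gt[of N] by (simp_all add: n_def s_def Suc_le_eq)
    have T_nonneg: "0 \<le> T N" unfolding T_def using nonneg by (simp add: sum_nonneg)
    have "u (n - 1) * (real (n\<^sup>2) / real ((Suc n)\<^sup>2)) = T (n\<^sup>2) / real ((Suc n)\<^sup>2)"
      using n by (simp add: u_def)
    also have "\<dots> \<le> T N / real ((Suc n)\<^sup>2)"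
      using T_mono[OF n(2)] by (simp add: divide_right_mono)
    also have "\<dots> \<le> T N / real N"
    proof (rule divide_left_mono[OF _ T_nonneg])
      show "real N \<le> real ((Suc n)\<^sup>2)" using n by linarith
    qed (use that in simp)
    finally have lo: "u (n - 1) * (real (n\<^sup>2) / real ((Suc n)\<^sup>2)) \<le> T N / real N" .
    have "T N / real N \<le> T N / real (n\<^sup>2)"
    proof (rule divide_left_mono[OF _ T_nonneg])
      show "real (n\<^sup>2) \<le> real N" using n by linarith
    qed (use that n in simp)
    also have "\<dots> \<le> T ((Suc n)\<^sup>2) / real (n\<^sup>2)"
      using T_mono[of N "(Suc n)\<^sup>2"] n by (simp add: divide_right_mono)
    also have "\<dots> = u n * (real ((Suc n)\<^sup>2) / real (n\<^sup>2))"
      by (simp add: u_def)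
    finally show ?thesis using lo by (simp add: n_def)
  qed
  then have "(\<lambda>N. T N / real N) \<longlonglongrightarrow> \<mu>"
    by (intro tendsto_sandwich[OF _ _ lower upper]) (auto simp: eventually_sequentially)
  then show ?thesis by (simp add: T_def)
qed

lemma (in prob_space) AE_tendsto_of_summable_deviation_prob:
  fixes Y :: "nat \<Rightarrow> 'a \<Rightarrow> real"
  assumes [measurable]: "\<And>n. Y n \<in> borel_measurable M"
    and summable: "\<And>\<epsilon>. \<epsilon> > 0 \<Longrightarrow> summable (\<lambda>n. prob {\<omega> \<in> space M. \<epsilon> \<le> \<bar>Y n \<omega> - \<mu>\<bar>})"
  shows "AE \<omega> in M. (\<lambda>n. Y n \<omega>) \<longlonglongrightarrow> \<mu>"
proof -
  have "AE \<omega> in M. eventually (\<lambda>n. \<bar>Y n \<omega> - \<mu>\<bar> < 1 / real (Suc m)) sequentially" for m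
  proof -
    have "AE \<omega> in M. eventually (\<lambda>n. \<omega> \<in> space M - {\<omega> \<in> space M. 1 / real (Suc m) \<le> \<bar>Y n \<omega> - \<mu>\<bar>}) sequentially"
      using summable[of "1 / real (Suc m)"]
      by (intro borel_cantelli_AE1) (auto simp: emeasure_eq_measure)
    then show ?thesis
      by (rule AE_mp) (auto simp: not_le elim: eventually_mono)
  qed
  then have "AE \<omega> in M. \<forall>m. eventually (\<lambda>n. \<bar>Y n \<omega> - \<mu>\<bar> < 1 / real (Suc m)) sequentially"
    by (simp add: AE_all_countable)
  then show ?thesis
  proof (rule AE_mp, intro AE_I2 impI LIMSEQ_I)
    fix \<omega> and r :: real
    assume H: "\<forall>m. eventually (\<lambda>n. \<bar>Y n \<omega> - \<mu>\<bar> < 1 / real (Suc m)) sequentially" and "0 < r"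
    then obtain m where "1 / real (Suc m) < r"
      using reals_Archimedean by (auto simp: divide_inverse)
    with H[rule_format, of m] show "\<exists>n0. \<forall>n\<ge>n0. norm (Y n \<omega> - \<mu>) < r"
      unfolding eventually_sequentially by force
  qed
qed

lemma (in prob_space) expectation_centered_sum_square_le:
  fixes X :: "nat \<Rightarrow> 'a \<Rightarrow> real"
  assumes [measurable]: "\<And>i. X i \<in> borel_measurable M"
    and indep: "\<And>i j. i \<noteq> j \<Longrightarrow> indep_var borel (X i) borel (X j)"
    and square_int: "\<And>i. integrable M (\<lambda>\<omega>. (X i \<omega>)\<^sup>2)"
    and square_le: "\<And>i. expectation (\<lambda>\<omega>. (X i \<omega>)\<^sup>2) \<le> B"
    and mean: "\<And>i. expectation (X i) = \<mu>"
  shows "integrable M (\<lambda>\<omega>. ((\<Sum>i<N. X i \<omega>) - real N * \<mu>)\<^sup>2)"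
    and "expectation (\<lambda>\<omega>. ((\<Sum>i<N. X i \<omega>) - real N * \<mu>)\<^sup>2) \<le> real N * B"
proof -
  define Y where "Y i \<omega> = X i \<omega> - \<mu>" for i \<omega>
  have int_X: "integrable M (X i)" for i
    by (rule square_integrable_imp_integrable[OF _ square_int]) simp
  then have int_Y: "integrable M (Y i)" for i
    by (simp add: Y_def[abs_def])
  have square_Y: "(\<lambda>\<omega>. Y i \<omega> * Y i \<omega>) = (\<lambda>\<omega>. (X i \<omega>)\<^sup>2 - 2 * \<mu> * X i \<omega> + \<mu>\<^sup>2)" for i
    by (auto simp: Y_def power2_eq_square algebra_simps)
  have indep_Y: "indep_var borel (Y i) borel (Y j)" if "i \<noteq> j" for i j
  proof -
    have "indep_var borel ((\<lambda>x. x - \<mu>) \<circ> X i) borel ((\<lambda>x. x - \<mu>) \<circ> X j)"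
      by (rule indep_var_compose[OF indep[OF that]]) measurable
    then show ?thesis by (simp add: Y_def[abs_def] o_def)
  qed
  have int_YY: "integrable M (\<lambda>\<omega>. Y i \<omega> * Y j \<omega>)" for i j
  proof (cases "i = j")
    case True
    then show ?thesis using square_int int_X by (simp add: square_Y)
  next
    case False
    from indep_var_integrable[OF indep_Y[OF this] int_Y int_Y] show ?thesis .
  qed
  have E_Y: "expectation (Y i) = 0" for i
    using int_X mean by (simp add: Y_def[abs_def] prob_space)
  have E_YY: "expectation (\<lambda>\<omega>. Y i \<omega> * Y j \<omega>)
      = (if i = j then expectation (\<lambda>\<omega>. (X i \<omega>)\<^sup>2) - \<mu>\<^sup>2 else 0)" for i j
  proof (cases "i = j")
    case True
    have "expectation (\<lambda>\<omega>. Y i \<omega> * Y i \<omega>)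
        = expectation (\<lambda>\<omega>. (X i \<omega>)\<^sup>2) - 2 * \<mu> * expectation (X i) + \<mu>\<^sup>2"
      unfolding square_Y using square_int int_X by (simp add: prob_space)
    then show ?thesis using True mean by (simp add: power2_eq_square)
  next
    case False
    then show ?thesis
      using indep_var_lebesgue_integral[OF indep_Y[OF False] int_Y int_Y] by (simp add: E_Y)
  qed
  have expand: "((\<Sum>i<N. X i \<omega>) - real N * \<mu>)\<^sup>2 = (\<Sum>i<N. \<Sum>j<N. Y i \<omega> * Y j \<omega>)" for \<omega>
  proof -
    have "(\<Sum>i<N. X i \<omega>) - real N * \<mu> = (\<Sum>i<N. Y i \<omega>)"
      by (simp add: Y_def sum_subtractf)
    then show ?thesis by (simp only: power2_eq_square sum_product)
  qed
  show "integrable M (\<lambda>\<omega>. ((\<Sum>i<N. X i \<omega>) - real N * \<mu>)\<^sup>2)"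
    unfolding expand using int_YY by auto
  have "expectation (\<lambda>\<omega>. ((\<Sum>i<N. X i \<omega>) - real N * \<mu>)\<^sup>2)
      = (\<Sum>i<N. expectation (\<lambda>\<omega>. (X i \<omega>)\<^sup>2) - \<mu>\<^sup>2)"
    unfolding expand using int_YY by (simp add: E_YY sum.delta)
  also have "\<dots> \<le> (\<Sum>i<N. B)"
    by (rule sum_mono) (use square_le in \<open>smt (verit) zero_le_power2\<close>)
  also have "\<dots> = real N * B"
    by simp
  finally show "expectation (\<lambda>\<omega>. ((\<Sum>i<N. X i \<omega>) - real N * \<mu>)\<^sup>2) \<le> real N * B" .
qed

lemma (in prob_space) prob_average_deviation_le:
  fixes X :: "nat \<Rightarrow> 'a \<Rightarrow> real"
  assumes [measurable]: "\<And>i. X i \<in> borel_measurable M"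
    and indep: "\<And>i j. i \<noteq> j \<Longrightarrow> indep_var borel (X i) borel (X j)"
    and square_int: "\<And>i. integrable M (\<lambda>\<omega>. (X i \<omega>)\<^sup>2)"
    and square_le: "\<And>i. expectation (\<lambda>\<omega>. (X i \<omega>)\<^sup>2) \<le> B"
    and mean: "\<And>i. expectation (X i) = \<mu>"
    and "\<epsilon> > 0" "N > 0"
  shows "prob {\<omega> \<in> space M. \<epsilon> \<le> \<bar>(\<Sum>i<N. X i \<omega>) / real N - \<mu>\<bar>} \<le> B / (real N * \<epsilon>\<^sup>2)"
proof -
  let ?S = "\<lambda>\<omega>. \<Sum>i<N. X i \<omega>"
  have centered: "integrable M (\<lambda>\<omega>. (?S \<omega> - real N * \<mu>)\<^sup>2)"
      "expectation (\<lambda>\<omega>. (?S \<omega> - real N * \<mu>)\<^sup>2) \<le> real N * B"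
    using expectation_centered_sum_square_le[OF assms(1-5)] by auto
  have int_X: "integrable M (X i)" for i
    by (rule square_integrable_imp_integrable[OF _ square_int]) simp
  have E_S: "expectation ?S = real N * \<mu>"
    using int_X mean by simp
  have square_int_S: "integrable M (\<lambda>\<omega>. (?S \<omega>)\<^sup>2)"
  proof -
    have "(\<lambda>\<omega>. (?S \<omega>)\<^sup>2)
        = (\<lambda>\<omega>. (?S \<omega> - real N * \<mu>)\<^sup>2 + 2 * (real N * \<mu>) * ?S \<omega> - (real N * \<mu>)\<^sup>2)"
      by (auto simp: power2_eq_square algebra_simps)
    then show ?thesis using centered(1) int_X by simp
  qed
  have "\<bar>?S \<omega> / real N - \<mu>\<bar> = \<bar>?S \<omega> - expectation ?S\<bar> / real N" for \<omega>
    using \<open>N > 0\<close> by (simp add: E_S field_simps abs_divide)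
  then have "prob {\<omega> \<in> space M. \<epsilon> \<le> \<bar>?S \<omega> / real N - \<mu>\<bar>}
      = prob {\<omega> \<in> space M. \<epsilon> * real N \<le> \<bar>?S \<omega> - expectation ?S\<bar>}"
    using \<open>N > 0\<close> by (simp add: pos_le_divide_eq)
  also have "\<dots> \<le> variance ?S / (\<epsilon> * real N)\<^sup>2"
    using \<open>\<epsilon> > 0\<close> \<open>N > 0\<close> by (intro Chebyshev_inequality square_int_S) simp_all
  also have "\<dots> \<le> real N * B / (\<epsilon> * real N)\<^sup>2"
    using centered(2) by (intro divide_right_mono) (simp_all add: E_S)
  also have "\<dots> = B / (real N * \<epsilon>\<^sup>2)"
    using \<open>N > 0\<close> \<open>\<epsilon> > 0\<close> by (simp add: power2_eq_square field_simps)
  finally show ?thesis .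
qed

lemma (in prob_space) strong_law_pairwise_indep_nonneg:
  fixes X :: "nat \<Rightarrow> 'a \<Rightarrow> real"
  assumes [measurable]: "\<And>i. X i \<in> borel_measurable M"
    and nonneg: "\<And>i \<omega>. 0 \<le> X i \<omega>"
    and indep: "\<And>i j. i \<noteq> j \<Longrightarrow> indep_var borel (X i) borel (X j)"
    and square_int: "\<And>i. integrable M (\<lambda>\<omega>. (X i \<omega>)\<^sup>2)"
    and square_le: "\<And>i. expectation (\<lambda>\<omega>. (X i \<omega>)\<^sup>2) \<le> B"
    and mean: "\<And>i. expectation (X i) = \<mu>"
  shows "AE \<omega> in M. (\<lambda>N. (\<Sum>i<N. X i \<omega>) / real N) \<longlonglongrightarrow> \<mu>"
proof -
  have "AE \<omega> in M. (\<lambda>n. (\<Sum>i<(Suc n)\<^sup>2. X i \<omega>) / real ((Suc n)\<^sup>2)) \<longlonglongrightarrow> \<mu>"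
  proof (rule AE_tendsto_of_summable_deviation_prob)
    fix \<epsilon> :: real assume "\<epsilon> > 0"
    have "summable (\<lambda>n. inverse (real (Suc n) ^ 2))"
      using inverse_power_summable[of 2, where 'a = real] summable_Suc_iff[of "\<lambda>n. inverse (real n ^ 2)"]
      by simp
    then have dominating: "summable (\<lambda>n. B / \<epsilon>\<^sup>2 * inverse (real (Suc n) ^ 2))"
      by (rule summable_mult)
    have bound: "norm (prob {\<omega> \<in> space M. \<epsilon> \<le> \<bar>(\<Sum>i<(Suc n)\<^sup>2. X i \<omega>) / real ((Suc n)\<^sup>2) - \<mu>\<bar>})
        \<le> B / \<epsilon>\<^sup>2 * inverse (real (Suc n) ^ 2)" for n
    proof -
      have "(Suc n)\<^sup>2 > 0"
        by simp
      from prob_average_deviation_le[where X = X, OF assms(1) indep square_int square_le mean \<open>\<epsilon> > 0\<close> this]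
      have "prob {\<omega> \<in> space M. \<epsilon> \<le> \<bar>(\<Sum>i<(Suc n)\<^sup>2. X i \<omega>) / real ((Suc n)\<^sup>2) - \<mu>\<bar>}
          \<le> B / (real ((Suc n)\<^sup>2) * \<epsilon>\<^sup>2)" .
      also have "\<dots> = B / \<epsilon>\<^sup>2 * inverse (real (Suc n) ^ 2)"
        by (simp add: field_simps)
      finally show ?thesis by simp
    qed
    show "summable (\<lambda>n. prob {\<omega> \<in> space M. \<epsilon> \<le> \<bar>(\<Sum>i<(Suc n)\<^sup>2. X i \<omega>) / real ((Suc n)\<^sup>2) - \<mu>\<bar>})"
      by (rule summable_comparison_test[OF _ dominating]) (use bound in blast)
  qed simp
  then show ?thesis
    by (rule AE_mp) (intro AE_I2 impI averages_tendsto_of_square_averages[OF nonneg])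
qed

lemma (in prob_space) expectation_halfspace_indep_normal:
  fixes X R :: "'a \<Rightarrow> real"
  assumes \<sigma>: "\<sigma> > 0" and \<tau>: "\<tau> > 0"
    and X: "distributed M lborel X (normal_density 0 \<sigma>)"
    and R: "distributed M lborel R (normal_density 0 \<tau>)"
    and indep: "indep_var borel X borel R"
  shows "integrable M (\<lambda>\<omega>. ind (a * X \<omega> + R \<omega>) * X \<omega>)"
    and "expectation (\<lambda>\<omega>. ind (a * X \<omega> + R \<omega>) * X \<omega>) = a * \<sigma>\<^sup>2 / sqrt (2 * pi * (\<tau>\<^sup>2 + \<sigma>\<^sup>2 * a\<^sup>2))"
proof -
  let ?g = "\<lambda>(s, r). ind (a * s + r) * s"
  let ?f = "\<lambda>(s, r). normal_density 0 \<sigma> s * normal_density 0 \<tau> r"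
  have "distributed M (lborel \<Otimes>\<^sub>M lborel) (\<lambda>\<omega>. (X \<omega>, R \<omega>))
      (\<lambda>(s, r). ennreal (normal_density 0 \<sigma> s) * ennreal (normal_density 0 \<tau> r))"
    using indep by (intro distributed_joint_indep lborel.sigma_finite_measure_axioms X R)
      (simp add: indep_var_eq)
  moreover have "(\<lambda>(s, r). ennreal (normal_density 0 \<sigma> s) * ennreal (normal_density 0 \<tau> r))
      = (\<lambda>p. ennreal (?f p))"
    by (auto simp: fun_eq_iff ennreal_mult)
  ultimately have joint: "distributed M (lborel \<Otimes>\<^sub>M lborel) (\<lambda>\<omega>. (X \<omega>, R \<omega>)) (\<lambda>p. ennreal (?f p))"
    by simp
  have g: "?g \<in> borel_measurable (lborel \<Otimes>\<^sub>M lborel)"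
    by measurable
  have f_g: "(\<lambda>p. ?f p * ?g p)
      = (\<lambda>(s, r). normal_density 0 \<sigma> s * normal_density 0 \<tau> r * (ind (a * s + r) * s))"
    by (auto simp: fun_eq_iff)
  show "integrable M (\<lambda>\<omega>. ind (a * X \<omega> + R \<omega>) * X \<omega>)"
    using distributed_integrable[OF joint g] normal_pair_first_moment_halfspace(1)[OF \<sigma> \<tau>, of a]
    unfolding f_g by (auto split: prod.splits)
  show "expectation (\<lambda>\<omega>. ind (a * X \<omega> + R \<omega>) * X \<omega>) = a * \<sigma>\<^sup>2 / sqrt (2 * pi * (\<tau>\<^sup>2 + \<sigma>\<^sup>2 * a\<^sup>2))"
    using distributed_integral[OF joint g] normal_pair_first_moment_halfspace(2)[OF \<sigma> \<tau>, of a]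
    unfolding f_g by (auto split: prod.splits)
qed

lemma (in prob_space) expectation_halfspace_normal:
  fixes X :: "'a \<Rightarrow> real"
  assumes \<sigma>: "\<sigma> > 0" and X: "distributed M lborel X (normal_density 0 \<sigma>)"
  shows "integrable M (\<lambda>\<omega>. ind (a * X \<omega>) * X \<omega>)"
    and "expectation (\<lambda>\<omega>. ind (a * X \<omega>) * X \<omega>) = a * \<sigma>\<^sup>2 * normal_density 0 (\<sigma> * \<bar>a\<bar>) 0"
proof -
  have eq: "(\<lambda>s. normal_density 0 \<sigma> s * (ind (a * s) * s)) = (\<lambda>s. ind (a * s + 0) * s * normal_density 0 \<sigma> s)"
    by (simp add: fun_eq_iff mult_ac)
  show "integrable M (\<lambda>\<omega>. ind (a * X \<omega>) * X \<omega>)"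
    using distributed_integrable[OF X, of "\<lambda>s. ind (a * s) * s"] normal_first_moment_halfspace(1)[OF \<sigma>, of a 0]
    unfolding eq by simp
  show "expectation (\<lambda>\<omega>. ind (a * X \<omega>) * X \<omega>) = a * \<sigma>\<^sup>2 * normal_density 0 (\<sigma> * \<bar>a\<bar>) 0"
    using distributed_integral[OF X, of "\<lambda>s. ind (a * s) * s"] normal_first_moment_halfspace(2)[OF \<sigma>, of a 0]
    unfolding eq by simp
qed

text \<open>Split the linear form as \<open>y l * X l + R\<close>, where \<open>R\<close> is an independent centred normal
  variable, or \<open>0\<close> if all other coefficients vanish.\<close>

lemma (in prob_space) expectation_halfspace_indep_normals:
  fixes X :: "'i \<Rightarrow> 'a \<Rightarrow> real" and y :: "'i \<Rightarrow> real"
  assumes c: "c > 0" and I: "finite I" "l \<in> I"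
    and indep: "indep_vars (\<lambda>_. borel) X I"
    and normal: "\<And>m. m \<in> I \<Longrightarrow> distributed M lborel (X m) (normal_density 0 c)"
    and y: "\<exists>m\<in>I. y m \<noteq> 0"
  shows "integrable M (\<lambda>\<omega>. ind (\<Sum>m\<in>I. y m * X m \<omega>) * X l \<omega>)"
    and "expectation (\<lambda>\<omega>. ind (\<Sum>m\<in>I. y m * X m \<omega>) * X l \<omega>)
           = c * y l / (sqrt (\<Sum>m\<in>I. (y m)\<^sup>2) * sqrt (2 * pi))"
proof -
  define K where "K = {m \<in> I - {l}. y m \<noteq> 0}"
  define R where "R \<omega> = (\<Sum>m\<in>K. y m * X m \<omega>)" for \<omega>
  define \<rho> where "\<rho> = (\<Sum>m\<in>K. (y m)\<^sup>2)"
  have K: "finite K" "K \<subseteq> I" "l \<notin> K"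
    using I by (auto simp: K_def)
  have split: "(\<Sum>m\<in>I. f m) = f l + (\<Sum>m\<in>K. f m)" if "\<And>m. y m = 0 \<Longrightarrow> f m = 0" for f :: "'i \<Rightarrow> real"
  proof -
    have "(\<Sum>m\<in>I. f m) = f l + (\<Sum>m\<in>I - {l}. f m)"
      using I by (simp add: sum.remove)
    also have "(\<Sum>m\<in>I - {l}. f m) = (\<Sum>m\<in>K. f m)"
      using that I by (intro sum.mono_neutral_right) (auto simp: K_def)
    finally show ?thesis .
  qed
  have linear_form: "(\<Sum>m\<in>I. y m * X m \<omega>) = y l * X l \<omega> + R \<omega>" for \<omega>
    using split[of "\<lambda>m. y m * X m \<omega>"] by (simp add: R_def)
  have norm_y: "(\<Sum>m\<in>I. (y m)\<^sup>2) = (y l)\<^sup>2 + \<rho>"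
    using split[of "\<lambda>m. (y m)\<^sup>2"] by (simp add: \<rho>_def)
  have X_measurable [measurable]: "X m \<in> borel_measurable M" if "m \<in> I" for m
    using distributed_measurable[OF normal[OF that]] by simp
  have "integrable M (\<lambda>\<omega>. ind (\<Sum>m\<in>I. y m * X m \<omega>) * X l \<omega>) \<and>
      expectation (\<lambda>\<omega>. ind (\<Sum>m\<in>I. y m * X m \<omega>) * X l \<omega>)
        = c * y l / (sqrt (\<Sum>m\<in>I. (y m)\<^sup>2) * sqrt (2 * pi))"
  proof (cases "K = {}")
    case True
    then have "R = (\<lambda>_. 0)" "\<rho> = 0"
      by (simp_all add: R_def[abs_def] \<rho>_def)
    moreover have "y l \<noteq> 0"
      using y True by (auto simp: K_def)
    moreover have "y l * c\<^sup>2 * normal_density 0 (c * \<bar>y l\<bar>) 0 = c * y l / (\<bar>y l\<bar> * sqrt (2 * pi))"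
      if "y l \<noteq> 0"
      using c that by (simp add: normal_density_def real_sqrt_mult power2_eq_square field_simps)
    ultimately show ?thesis
      using expectation_halfspace_normal[OF c normal[OF I(2)], of "y l"] norm_y
      by (simp add: linear_form)
  next
    case False
    define \<tau> where "\<tau> = c * sqrt \<rho>"
    have "\<rho> > 0"
      using False unfolding \<rho>_def by (intro sum_pos K) (auto simp: K_def)
    then have \<tau>: "\<tau> > 0"
      using c by (simp add: \<tau>_def)
    have "indep_vars (\<lambda>_. borel) (\<lambda>m \<omega>. y m * X m \<omega>) K"
      by (rule indep_vars_compose2[OF indep_vars_subset[OF indep K(2)]]) auto
    then have "distributed M lborel R (normal_density (\<Sum>m\<in>K. 0) (sqrt (\<Sum>m\<in>K. (\<bar>y m\<bar> * c)\<^sup>2)))"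
      unfolding R_def using False K c
      by (intro sum_indep_normal) (auto simp: K_def intro: normal_density_affine[OF normal, of _ _ 0, simplified])
    moreover have "sqrt (\<Sum>m\<in>K. (\<bar>y m\<bar> * c)\<^sup>2) = \<tau>"
    proof -
      have "(\<Sum>m\<in>K. (\<bar>y m\<bar> * c)\<^sup>2) = c\<^sup>2 * \<rho>"
        by (simp add: \<rho>_def sum_distrib_left power_mult_distrib mult_ac)
      then show ?thesis
        using c by (simp add: \<tau>_def real_sqrt_mult)
    qed
    ultimately have R: "distributed M lborel R (normal_density 0 \<tau>)"
      by simp
    have "indep_var borel ((\<lambda>f. f l) \<circ> (\<lambda>\<omega>. restrict (\<lambda>m. X m \<omega>) {l}))
        borel ((\<lambda>f. \<Sum>m\<in>K. y m * f m) \<circ> (\<lambda>\<omega>. restrict (\<lambda>m. X m \<omega>) K))"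
      using K I by (intro indep_var_compose[OF indep_var_restrict[OF indep]]) auto
    then have "indep_var borel (X l) borel R"
      by (simp add: R_def[abs_def] o_def cong: sum.cong)
    note halfspace = expectation_halfspace_indep_normal[OF c \<tau> normal[OF I(2)] R this, of "y l"]
    have "sqrt (2 * pi * (\<tau>\<^sup>2 + c\<^sup>2 * (y l)\<^sup>2)) = c * sqrt (\<Sum>m\<in>I. (y m)\<^sup>2) * sqrt (2 * pi)"
    proof (rule real_sqrt_unique)
      show "(c * sqrt (\<Sum>m\<in>I. (y m)\<^sup>2) * sqrt (2 * pi))\<^sup>2 = 2 * pi * (\<tau>\<^sup>2 + c\<^sup>2 * (y l)\<^sup>2)"
        using \<open>\<rho> > 0\<close> unfolding norm_y \<tau>_def
        by (simp add: power_mult_distrib algebra_simps add_nonneg_pos)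
    qed (use c in \<open>simp add: sum_nonneg\<close>)
    then have coefficient: "y l * c\<^sup>2 / sqrt (2 * pi * (\<tau>\<^sup>2 + c\<^sup>2 * (y l)\<^sup>2))
        = c * y l / (sqrt (\<Sum>m\<in>I. (y m)\<^sup>2) * sqrt (2 * pi))"
      using c by (simp add: power2_eq_square)
    show ?thesis
      by (simp only: linear_form halfspace coefficient simp_thms)
  qed
  then show "integrable M (\<lambda>\<omega>. ind (\<Sum>m\<in>I. y m * X m \<omega>) * X l \<omega>)"
    and "expectation (\<lambda>\<omega>. ind (\<Sum>m\<in>I. y m * X m \<omega>) * X l \<omega>)
           = c * y l / (sqrt (\<Sum>m\<in>I. (y m)\<^sup>2) * sqrt (2 * pi))"
    by auto
qed

lemma (in prob_space) expectation_abs_normal: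
  assumes c: "c > 0" and X: "distributed M lborel X (normal_density 0 c)"
  shows "integrable M (\<lambda>\<omega>. \<bar>X \<omega>\<bar>)" and "expectation (\<lambda>\<omega>. \<bar>X \<omega>\<bar>) = c * sqrt (2 / pi)"
  using distributed_integrable[OF X, of abs] distributed_integral[OF X, of abs]
    integrable_normal_moment_abs[OF c, of 0 1] integral_normal_moment_abs_odd[OF c, of 0 0]
  by simp_all

lemma (in prob_space) expectation_square_normal:
  assumes c: "c > 0" and X: "distributed M lborel X (normal_density 0 c)"
  shows "integrable M (\<lambda>\<omega>. (X \<omega>)\<^sup>2)" and "expectation (\<lambda>\<omega>. (X \<omega>)\<^sup>2) = c\<^sup>2"
  using distributed_integrable[OF X, of "\<lambda>x. x\<^sup>2"] distributed_integral[OF X, of "\<lambda>x. x\<^sup>2"]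
    integrable_normal_moment[OF c, of 0 2] integral_normal_moment_even[OF c, of 0 1]
  by simp_all

lemma (in prob_space) expectation_relu_normal:
  assumes c: "c > 0" and X: "distributed M lborel X (normal_density 0 c)"
  shows "integrable M (\<lambda>\<omega>. relu (X \<omega>))" and "expectation (\<lambda>\<omega>. relu (X \<omega>)) = c / sqrt (2 * pi)"
proof -
  have relu: "(\<lambda>\<omega>. relu (X \<omega>)) = (\<lambda>\<omega>. (X \<omega> + \<bar>X \<omega>\<bar>) / 2)"
    by (auto simp: relu_def fun_eq_iff max_def)
  have "integrable M X"
    using distributed_integrable[OF X, of "\<lambda>x. x"] integrable_normal_moment[OF c, of 0 1] by simp
  moreover have "expectation X = 0"
    by (rule normal_distributed_expectation[OF c X])
  moreover note expectation_abs_normal[OF c X]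
  moreover have "sqrt (2 / pi) * sqrt (2 * pi) = 2"
    by (simp add: real_sqrt_mult[symmetric])
  ultimately show "integrable M (\<lambda>\<omega>. relu (X \<omega>))" "expectation (\<lambda>\<omega>. relu (X \<omega>)) = c / sqrt (2 * pi)"
    unfolding relu by (simp_all add: field_simps)
qed

lemma (in prob_space) relu_normal_mult_indep:
  assumes c: "c > 0" and V: "distributed M lborel V (normal_density 0 c)"
    and U [measurable]: "U \<in> borel_measurable M" and square_int_U: "integrable M (\<lambda>\<omega>. (U \<omega>)\<^sup>2)"
    and indep: "indep_var borel V borel U"
  shows "integrable M (\<lambda>\<omega>. relu (V \<omega>) * U \<omega>)"
    and "expectation (\<lambda>\<omega>. relu (V \<omega>) * U \<omega>) = c / sqrt (2 * pi) * expectation U"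
    and "integrable M (\<lambda>\<omega>. (relu (V \<omega>) * U \<omega>)\<^sup>2)"
    and "expectation (\<lambda>\<omega>. (relu (V \<omega>) * U \<omega>)\<^sup>2) \<le> c\<^sup>2 * expectation (\<lambda>\<omega>. (U \<omega>)\<^sup>2)"
proof -
  have [measurable]: "V \<in> borel_measurable M"
    using distributed_measurable[OF V] by simp
  have int_U: "integrable M U"
    by (rule square_integrable_imp_integrable[OF U square_int_U])
  note relu = expectation_relu_normal[OF c V]
  note square = expectation_square_normal[OF c V]
  have "indep_var borel (relu \<circ> V) borel (id \<circ> U)"
    by (rule indep_var_compose[OF indep]) simp_all
  then have indep_relu: "indep_var borel (\<lambda>\<omega>. relu (V \<omega>)) borel U"
    by (simp add: o_def)
  show "integrable M (\<lambda>\<omega>. relu (V \<omega>) * U \<omega>)"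
    by (rule indep_var_integrable[OF indep_relu relu(1) int_U])
  show "expectation (\<lambda>\<omega>. relu (V \<omega>) * U \<omega>) = c / sqrt (2 * pi) * expectation U"
    using indep_var_lebesgue_integral[OF indep_relu relu(1) int_U] relu(2) by simp
  have "indep_var borel ((\<lambda>v. (relu v)\<^sup>2) \<circ> V) borel ((\<lambda>u. u\<^sup>2) \<circ> U)"
    by (rule indep_var_compose[OF indep]) simp_all
  then have indep_squares: "indep_var borel (\<lambda>\<omega>. (relu (V \<omega>))\<^sup>2) borel (\<lambda>\<omega>. (U \<omega>)\<^sup>2)"
    by (simp add: o_def)
  have relu_square_le: "(relu v)\<^sup>2 \<le> v\<^sup>2" for v
    by (simp add: relu_def max_def)
  have int_relu_square: "integrable M (\<lambda>\<omega>. (relu (V \<omega>))\<^sup>2)"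
    by (rule Bochner_Integration.integrable_bound[OF square(1)]) (auto simp: relu_square_le)
  have E_relu_square: "expectation (\<lambda>\<omega>. (relu (V \<omega>))\<^sup>2) \<le> c\<^sup>2"
    using integral_mono[OF int_relu_square square(1) relu_square_le] square(2) by simp
  show "integrable M (\<lambda>\<omega>. (relu (V \<omega>) * U \<omega>)\<^sup>2)"
    using indep_var_integrable[OF indep_squares int_relu_square square_int_U]
    by (simp add: power_mult_distrib)
  have "expectation (\<lambda>\<omega>. (relu (V \<omega>) * U \<omega>)\<^sup>2)
      = expectation (\<lambda>\<omega>. (relu (V \<omega>))\<^sup>2) * expectation (\<lambda>\<omega>. (U \<omega>)\<^sup>2)"
    using indep_var_lebesgue_integral[OF indep_squares int_relu_square square_int_U]
    by (simp add: power_mult_distrib)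
  also have "\<dots> \<le> c\<^sup>2 * expectation (\<lambda>\<omega>. (U \<omega>)\<^sup>2)"
    using E_relu_square by (intro mult_right_mono) auto
  finally show "expectation (\<lambda>\<omega>. (relu (V \<omega>) * U \<omega>)\<^sup>2) \<le> c\<^sup>2 * expectation (\<lambda>\<omega>. (U \<omega>)\<^sup>2)" .
qed

lemma (in prob_space) indep_var_restrict_compose:
  assumes "indep_vars (\<lambda>_. borel) X I" "A \<inter> B = {}" "A \<subseteq> I" "B \<subseteq> I"
    and "F \<in> borel_measurable (PiM A (\<lambda>_. borel))" "G \<in> borel_measurable (PiM B (\<lambda>_. borel))"
  shows "indep_var borel (\<lambda>\<omega>. F (restrict (\<lambda>i. X i \<omega>) A)) borel (\<lambda>\<omega>. G (restrict (\<lambda>i. X i \<omega>) B))"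
  using indep_var_compose[OF indep_var_restrict[OF assms(1-4)] assms(5,6)] by (simp add: o_def)

text \<open>All weights of the network as one family, indexed by \<open>Inl (i, m)\<close> for coordinate \<open>m\<close>
  of the filter \<open>w i\<close> and by \<open>Inr q\<close> for the second-layer weight \<open>V q\<close>.\<close>

definition gbp_weights ::
  "(nat \<Rightarrow> 'a \<Rightarrow> real^'p) \<Rightarrow> (nat \<Rightarrow> 'a \<Rightarrow> real) \<Rightarrow> (nat \<times> 'p) + nat \<Rightarrow> 'a \<Rightarrow> real" where
  "gbp_weights w V = (\<lambda>z. case z of Inl (i, m) \<Rightarrow> (\<lambda>\<omega>. w i \<omega> $ m) | Inr q \<Rightarrow> V q)"

lemma gbp_weights_simps [simp]:
  "gbp_weights w V (Inl (i, m)) = (\<lambda>\<omega>. w i \<omega> $ m)"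
  "gbp_weights w V (Inr q) = V q"
  by (simp_all add: gbp_weights_def)

lemma inner_vec_eq_sum: "x \<bullet> y = (\<Sum>m\<in>UNIV. x $ m * y $ m)"
  by (simp add: inner_vec_def)

locale gbp_patch = prob_space +
  fixes c :: real and w :: "nat \<Rightarrow> 'a \<Rightarrow> real^'p" and V :: "nat \<Rightarrow> 'a \<Rightarrow> real"
    and q :: "nat \<Rightarrow> nat"
  assumes c_pos: "c > 0"
    and w_normal: "\<And>i m. i \<ge> 1 \<Longrightarrow> distributed M lborel (\<lambda>\<omega>. w i \<omega> $ m) (normal_density 0 c)"
    and V_normal: "\<And>i. i \<ge> 1 \<Longrightarrow> distributed M lborel (V (q i)) (normal_density 0 c)"
    and q_inj: "inj_on q {1..}"
    and weights_indep: "indep_vars (\<lambda>_. borel) (gbp_weights w V)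
           ({Inl (i, m) | i m. i \<ge> 1} \<union> {Inr (q i) | i. i \<ge> 1})"
begin

definition filter_coords :: "nat \<Rightarrow> ((nat \<times> 'p) + nat) set" where
  "filter_coords i = range (\<lambda>m. Inl (i, m))"

definition neuron_coords :: "nat \<Rightarrow> ((nat \<times> 'p) + nat) set" where
  "neuron_coords i = insert (Inr (q i)) (filter_coords i)"

lemma coords_mem [simp]:
  "Inl (i, m) \<in> filter_coords i" "Inl (i, m) \<in> neuron_coords i" "Inr (q i) \<in> neuron_coords i"
  by (simp_all add: filter_coords_def neuron_coords_def)

lemma w_measurable: "i \<ge> 1 \<Longrightarrow> (\<lambda>\<omega>. w i \<omega> $ m) \<in> borel_measurable M"
  using distributed_measurable[OF w_normal] by simp

lemma V_measurable: "i \<ge> 1 \<Longrightarrow> V (q i) \<in> borel_measurable M"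
  using distributed_measurable[OF V_normal] by simp

lemma indep_neuron_functions:
  assumes "i \<ge> 1" "j \<ge> 1" "i \<noteq> j"
    and "F \<in> borel_measurable (PiM (neuron_coords i) (\<lambda>_. borel))"
    and "G \<in> borel_measurable (PiM (neuron_coords j) (\<lambda>_. borel))"
  shows "indep_var borel (\<lambda>\<omega>. F (restrict (\<lambda>z. gbp_weights w V z \<omega>) (neuron_coords i)))
      borel (\<lambda>\<omega>. G (restrict (\<lambda>z. gbp_weights w V z \<omega>) (neuron_coords j)))"
proof (rule indep_var_restrict_compose[OF weights_indep _ _ _ assms(4,5)])
  show "neuron_coords i \<inter> neuron_coords j = {}"
    using assms(1-3) inj_onD[OF q_inj, of i j] by (auto simp: neuron_coords_def filter_coords_def)
qed (use assms(1,2) in \<open>auto simp: neuron_coords_def filter_coords_def\<close>)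

lemma indep_V_filter_function:
  assumes "i \<ge> 1" and "F \<in> borel_measurable (PiM (filter_coords i) (\<lambda>_. borel))"
  shows "indep_var borel (V (q i)) borel (\<lambda>\<omega>. F (restrict (\<lambda>z. gbp_weights w V z \<omega>) (filter_coords i)))"
proof -
  have "indep_var borel (\<lambda>\<omega>. (\<lambda>f. f (Inr (q i))) (restrict (\<lambda>z. gbp_weights w V z \<omega>) {Inr (q i)}))
      borel (\<lambda>\<omega>. F (restrict (\<lambda>z. gbp_weights w V z \<omega>) (filter_coords i)))"
    using assms
    by (intro indep_var_restrict_compose[OF weights_indep] measurable_component_singleton)
      (auto simp: filter_coords_def)
  then show ?thesis
    by simp
qed

lemma expectation_halfspace_filter:
  assumes i: "i \<ge> 1" and y: "y \<noteq> 0"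
  shows "integrable M (\<lambda>\<omega>. ind (w i \<omega> \<bullet> y) * w i \<omega> $ l)"
    and "expectation (\<lambda>\<omega>. ind (w i \<omega> \<bullet> y) * w i \<omega> $ l) = c * y $ l / (norm y * sqrt (2 * pi))"
proof -
  define u :: "(nat \<times> 'p) + nat \<Rightarrow> real" where "u z = (case z of Inl (_, m) \<Rightarrow> y $ m | Inr _ \<Rightarrow> 0)" for z
  have reindex: "(\<Sum>z\<in>filter_coords i. f z) = (\<Sum>m\<in>UNIV. f (Inl (i, m)))" for f :: "_ \<Rightarrow> real"
    unfolding filter_coords_def by (rule sum.reindex_cong[where l = "\<lambda>m. Inl (i, m)"]) (auto intro: inj_onI)
  have indep: "indep_vars (\<lambda>_. borel) (gbp_weights w V) (filter_coords i)"
    using i by (intro indep_vars_subset[OF weights_indep]) (auto simp: filter_coords_def)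
  have normal: "distributed M lborel (gbp_weights w V z) (normal_density 0 c)" if "z \<in> filter_coords i" for z
    using that w_normal[OF i] by (auto simp: filter_coords_def gbp_weights_def)
  have nonzero: "\<exists>z\<in>filter_coords i. u z \<noteq> 0"
    using y by (auto simp: vec_eq_iff u_def filter_coords_def)
  have finite: "finite (filter_coords i)"
    by (simp add: filter_coords_def)
  note halfspace = expectation_halfspace_indep_normals[OF c_pos finite coords_mem(1) indep normal nonzero]
  have "(\<Sum>z\<in>filter_coords i. u z * gbp_weights w V z \<omega>) = w i \<omega> \<bullet> y" for \<omega>
    by (simp add: reindex u_def gbp_weights_def inner_vec_eq_sum mult.commute)
  moreover have "sqrt (\<Sum>z\<in>filter_coords i. (u z)\<^sup>2) = norm y"
    by (simp add: reindex u_def norm_vec_def L2_set_def)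
  ultimately show "integrable M (\<lambda>\<omega>. ind (w i \<omega> \<bullet> y) * w i \<omega> $ l)"
    and "expectation (\<lambda>\<omega>. ind (w i \<omega> \<bullet> y) * w i \<omega> $ l) = c * y $ l / (norm y * sqrt (2 * pi))"
    using halfspace by (simp_all add: filter_coords_def u_def gbp_weights_def)
qed

text \<open>The summand \<open>relu (V) * ind (w \<bullet> y) * w $ l\<close> changes sign; it is the difference of the
  nonnegative terms below, to each of which the strong law for nonnegative variables applies.\<close>

definition upper_term :: "real^'p \<Rightarrow> 'p \<Rightarrow> nat \<Rightarrow> 'a \<Rightarrow> real" where
  "upper_term y l i \<omega> = relu (V (q i) \<omega>) * (ind (w i \<omega> \<bullet> y) * w i \<omega> $ l + \<bar>w i \<omega> $ l\<bar>)"

definition lower_term :: "'p \<Rightarrow> nat \<Rightarrow> 'a \<Rightarrow> real" where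
  "lower_term l i \<omega> = relu (V (q i) \<omega>) * \<bar>w i \<omega> $ l\<bar>"

lemma upper_term_nonneg: "0 \<le> upper_term y l i \<omega>"
  unfolding upper_term_def relu_def ind_def by (intro mult_nonneg_nonneg) auto

lemma lower_term_nonneg: "0 \<le> lower_term l i \<omega>"
  unfolding lower_term_def relu_def by simp

lemma upper_term_as_neuron_function:
  "upper_term y l i = (\<lambda>\<omega>. (\<lambda>f. relu (f (Inr (q i))) *
      (ind (\<Sum>m\<in>UNIV. f (Inl (i, m)) * y $ m) * f (Inl (i, l)) + \<bar>f (Inl (i, l))\<bar>))
    (restrict (\<lambda>z. gbp_weights w V z \<omega>) (neuron_coords i)))"
  by (simp add: fun_eq_iff upper_term_def inner_vec_eq_sum)

lemma lower_term_as_neuron_function: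
  "lower_term l i = (\<lambda>\<omega>. (\<lambda>f. relu (f (Inr (q i))) * \<bar>f (Inl (i, l))\<bar>)
    (restrict (\<lambda>z. gbp_weights w V z \<omega>) (neuron_coords i)))"
  by (simp add: fun_eq_iff lower_term_def)

lemma indep_upper_terms:
  "i \<ge> 1 \<Longrightarrow> j \<ge> 1 \<Longrightarrow> i \<noteq> j \<Longrightarrow> indep_var borel (upper_term y l i) borel (upper_term y l j)"
  unfolding upper_term_as_neuron_function by (intro indep_neuron_functions) measurable

lemma indep_lower_terms:
  "i \<ge> 1 \<Longrightarrow> j \<ge> 1 \<Longrightarrow> i \<noteq> j \<Longrightarrow> indep_var borel (lower_term l i) borel (lower_term l j)"
  unfolding lower_term_as_neuron_function by (intro indep_neuron_functions) measurable

lemma terms_measurable: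
  assumes "i \<ge> 1"
  shows "upper_term y l i \<in> borel_measurable M" and "lower_term l i \<in> borel_measurable M"
proof -
  have [measurable]: "(\<lambda>\<omega>. w i \<omega> $ m) \<in> borel_measurable M" for m
    using w_measurable[OF assms] .
  have [measurable]: "V (q i) \<in> borel_measurable M"
    using V_measurable[OF assms] .
  show "upper_term y l i \<in> borel_measurable M"
    unfolding upper_term_def[abs_def] inner_vec_eq_sum by measurable
  show "lower_term l i \<in> borel_measurable M"
    unfolding lower_term_def[abs_def] by measurable
qed

lemma upper_term_moments:
  assumes i: "i \<ge> 1" and y: "y \<noteq> 0"
  shows "integrable M (\<lambda>\<omega>. (upper_term y l i \<omega>)\<^sup>2)"
    and "expectation (upper_term y l i)
           = c / sqrt (2 * pi) * (c * y $ l / (norm y * sqrt (2 * pi)) + c * sqrt (2 / pi))"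
    and "expectation (\<lambda>\<omega>. (upper_term y l i \<omega>)\<^sup>2) \<le> 4 * c ^ 4"
proof -
  define U where "U \<omega> = ind (w i \<omega> \<bullet> y) * w i \<omega> $ l + \<bar>w i \<omega> $ l\<bar>" for \<omega>
  have [measurable]: "(\<lambda>\<omega>. w i \<omega> $ m) \<in> borel_measurable M" for m
    using w_measurable[OF i] .
  have U_measurable: "U \<in> borel_measurable M"
    unfolding U_def[abs_def] inner_vec_eq_sum by measurable
  note halfspace = expectation_halfspace_filter[OF i y, of l]
  note abs = expectation_abs_normal[OF c_pos w_normal[OF i]]
  note square = expectation_square_normal[OF c_pos w_normal[OF i]]
  have U_square_le: "(U \<omega>)\<^sup>2 \<le> 4 * (w i \<omega> $ l)\<^sup>2" for \<omega>
  proof -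
    have "\<bar>U \<omega>\<bar> \<le> 2 * \<bar>w i \<omega> $ l\<bar>"
      by (simp add: U_def ind_def abs_ge_self)
    then show ?thesis
      using abs_le_square_iff[of "U \<omega>" "2 * \<bar>w i \<omega> $ l\<bar>"] by (simp add: power_mult_distrib)
  qed
  have U_square_int: "integrable M (\<lambda>\<omega>. (U \<omega>)\<^sup>2)"
  proof (rule Bochner_Integration.integrable_bound)
    show "integrable M (\<lambda>\<omega>. 4 * (w i \<omega> $ l)\<^sup>2)"
      using square(1) by simp
    show "(\<lambda>\<omega>. (U \<omega>)\<^sup>2) \<in> borel_measurable M"
      using U_measurable by measurable
    show "AE \<omega> in M. norm ((U \<omega>)\<^sup>2) \<le> norm (4 * (w i \<omega> $ l)\<^sup>2)"
      using U_square_le by simp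
  qed
  have E_U_square: "expectation (\<lambda>\<omega>. (U \<omega>)\<^sup>2) \<le> 4 * c\<^sup>2"
    using integral_mono[OF U_square_int _ U_square_le] square by simp
  have E_U: "expectation U = c * y $ l / (norm y * sqrt (2 * pi)) + c * sqrt (2 / pi)"
    using halfspace abs by (simp add: U_def[abs_def])
  have "indep_var borel (V (q i)) borel (\<lambda>\<omega>. (\<lambda>f. ind (\<Sum>m\<in>UNIV. f (Inl (i, m)) * y $ m) * f (Inl (i, l))
      + \<bar>f (Inl (i, l))\<bar>) (restrict (\<lambda>z. gbp_weights w V z \<omega>) (filter_coords i)))"
    by (intro indep_V_filter_function[OF i]) measurable
  then have "indep_var borel (V (q i)) borel U"
    by (simp add: U_def[abs_def] inner_vec_eq_sum)
  note relu_mult = relu_normal_mult_indep[OF c_pos V_normal[OF i] U_measurable U_square_int this]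
  have upper: "upper_term y l i = (\<lambda>\<omega>. relu (V (q i) \<omega>) * U \<omega>)"
    by (simp add: fun_eq_iff upper_term_def U_def)
  show "integrable M (\<lambda>\<omega>. (upper_term y l i \<omega>)\<^sup>2)"
    using relu_mult(3) by (simp add: upper)
  show "expectation (upper_term y l i)
      = c / sqrt (2 * pi) * (c * y $ l / (norm y * sqrt (2 * pi)) + c * sqrt (2 / pi))"
    using relu_mult(2) by (simp add: upper E_U)
  have "c\<^sup>2 * expectation (\<lambda>\<omega>. (U \<omega>)\<^sup>2) \<le> c\<^sup>2 * (4 * c\<^sup>2)"
    using E_U_square by (intro mult_left_mono) auto
  then show "expectation (\<lambda>\<omega>. (upper_term y l i \<omega>)\<^sup>2) \<le> 4 * c ^ 4"
    using relu_mult(4) by (simp add: upper power4_eq_xxxx power2_eq_square mult_ac)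
qed

lemma lower_term_moments:
  assumes i: "i \<ge> 1"
  shows "integrable M (\<lambda>\<omega>. (lower_term l i \<omega>)\<^sup>2)"
    and "expectation (lower_term l i) = c / sqrt (2 * pi) * (c * sqrt (2 / pi))"
    and "expectation (\<lambda>\<omega>. (lower_term l i \<omega>)\<^sup>2) \<le> 4 * c ^ 4"
proof -
  have [measurable]: "(\<lambda>\<omega>. w i \<omega> $ m) \<in> borel_measurable M" for m
    using w_measurable[OF i] .
  note abs = expectation_abs_normal[OF c_pos w_normal[OF i]]
  note square = expectation_square_normal[OF c_pos w_normal[OF i]]
  have "indep_var borel (V (q i)) borel (\<lambda>\<omega>. (\<lambda>f. \<bar>f (Inl (i, l))\<bar>) (restrict (\<lambda>z. gbp_weights w V z \<omega>) (filter_coords i)))"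
    by (intro indep_V_filter_function[OF i]) measurable
  then have "indep_var borel (V (q i)) borel (\<lambda>\<omega>. \<bar>w i \<omega> $ l\<bar>)"
    by simp
  note relu_mult = relu_normal_mult_indep[OF c_pos V_normal[OF i] _ _ this]
  show "integrable M (\<lambda>\<omega>. (lower_term l i \<omega>)\<^sup>2)"
    using relu_mult(3) square(1) by (simp add: lower_term_def[abs_def])
  show "expectation (lower_term l i) = c / sqrt (2 * pi) * (c * sqrt (2 / pi))"
    using relu_mult(2) square(1) abs(2) by (simp add: lower_term_def[abs_def])
  have "expectation (\<lambda>\<omega>. (lower_term l i \<omega>)\<^sup>2) \<le> c\<^sup>2 * c\<^sup>2"
    using relu_mult(4) square by (simp add: lower_term_def[abs_def])
  also have "\<dots> \<le> 4 * c ^ 4"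
    using c_pos by (simp add: power4_eq_xxxx power2_eq_square)
  finally show "expectation (\<lambda>\<omega>. (lower_term l i \<omega>)\<^sup>2) \<le> 4 * c ^ 4" .
qed

lemma coordinate_average_tendsto:
  assumes y: "y \<noteq> 0"
  shows "AE \<omega> in M. (\<lambda>N. (\<Sum>n<N. relu (V (q (Suc n)) \<omega>) * ind (w (Suc n) \<omega> \<bullet> y) * w (Suc n) \<omega> $ l)
      / real N) \<longlonglongrightarrow> c\<^sup>2 / (2 * pi * norm y) * y $ l"
proof -
  define \<mu>\<^sub>u where "\<mu>\<^sub>u = c / sqrt (2 * pi) * (c * y $ l / (norm y * sqrt (2 * pi)) + c * sqrt (2 / pi))"
  define \<mu>\<^sub>l where "\<mu>\<^sub>l = c / sqrt (2 * pi) * (c * sqrt (2 / pi))"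
  have "AE \<omega> in M. (\<lambda>N. (\<Sum>n<N. upper_term y l (Suc n) \<omega>) / real N) \<longlonglongrightarrow> \<mu>\<^sub>u"
    using terms_measurable(1) upper_term_nonneg indep_upper_terms upper_term_moments[OF _ y]
    by (intro strong_law_pairwise_indep_nonneg[where B = "4 * c ^ 4"]) (simp_all add: \<mu>\<^sub>u_def)
  moreover have "AE \<omega> in M. (\<lambda>N. (\<Sum>n<N. lower_term l (Suc n) \<omega>) / real N) \<longlonglongrightarrow> \<mu>\<^sub>l"
    using terms_measurable(2) lower_term_nonneg indep_lower_terms lower_term_moments
    by (intro strong_law_pairwise_indep_nonneg[where B = "4 * c ^ 4"]) (simp_all add: \<mu>\<^sub>l_def)
  ultimately show ?thesis
  proof eventually_elim
    case (elim \<omega>)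
    have "\<mu>\<^sub>u - \<mu>\<^sub>l = c\<^sup>2 / (2 * pi * norm y) * y $ l"
      by (simp add: \<mu>\<^sub>u_def \<mu>\<^sub>l_def field_simps power2_eq_square)
    moreover have "(\<Sum>n<N. upper_term y l (Suc n) \<omega>) / real N - (\<Sum>n<N. lower_term l (Suc n) \<omega>) / real N
        = (\<Sum>n<N. relu (V (q (Suc n)) \<omega>) * ind (w (Suc n) \<omega> \<bullet> y) * w (Suc n) \<omega> $ l) / real N" for N
      by (simp add: upper_term_def lower_term_def diff_divide_distrib[symmetric] sum_subtractf[symmetric]
          algebra_simps)
    ultimately show ?case
      using tendsto_diff[OF elim] by simp
  qed
qed

lemma average_tendsto:
  assumes y: "y \<noteq> 0"
  shows "AE \<omega> in M. (\<lambda>N. (1 / real N) *\<^sub>R (\<Sum>i=1..N. (relu (V (q i) \<omega>) * ind (w i \<omega> \<bullet> y)) *\<^sub>R w i \<omega>))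
      \<longlonglongrightarrow> (c\<^sup>2 / (2 * pi * norm y)) *\<^sub>R y"
proof -
  have "AE \<omega> in M. \<forall>l\<in>UNIV. (\<lambda>N. (\<Sum>n<N. relu (V (q (Suc n)) \<omega>) * ind (w (Suc n) \<omega> \<bullet> y)
      * w (Suc n) \<omega> $ l) / real N) \<longlonglongrightarrow> c\<^sup>2 / (2 * pi * norm y) * y $ l"
    unfolding AE_finite_all[OF finite] using coordinate_average_tendsto[OF y] by blast
  then show ?thesis
  proof eventually_elim
    case (elim \<omega>)
    show ?case
    proof (rule vec_tendstoI)
      fix l
      have "(\<Sum>i=1..N. (relu (V (q i) \<omega>) * ind (w i \<omega> \<bullet> y)) *\<^sub>R w i \<omega>) $ l
          = (\<Sum>n<N. relu (V (q (Suc n)) \<omega>) * ind (w (Suc n) \<omega> \<bullet> y) * w (Suc n) \<omega> $ l)" for N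
        by (simp add: sum.atLeast1_atMost_eq)
      then have "(\<lambda>N. ((1 / real N) *\<^sub>R (\<Sum>i=1..N. (relu (V (q i) \<omega>) * ind (w i \<omega> \<bullet> y)) *\<^sub>R w i \<omega>)) $ l)
          = (\<lambda>N. (\<Sum>n<N. relu (V (q (Suc n)) \<omega>) * ind (w (Suc n) \<omega> \<bullet> y) * w (Suc n) \<omega> $ l) / real N)"
        by (simp add: fun_eq_iff)
      then show "(\<lambda>N. ((1 / real N) *\<^sub>R (\<Sum>i=1..N. (relu (V (q i) \<omega>) * ind (w i \<omega> \<bullet> y)) *\<^sub>R w i \<omega>)) $ l)
          \<longlonglongrightarrow> ((c\<^sup>2 / (2 * pi * norm y)) *\<^sub>R y) $ l"
        using elim by simp
    qed
  qed
qed

end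

lemma gbp_patch_qidx:
  fixes w :: "nat \<Rightarrow> 'a \<Rightarrow> real^'p" and V :: "nat \<Rightarrow> 'a \<Rightarrow> real"
  assumes M: "prob_space M" and c: "c > 0" and j: "j \<in> {1..J}"
    and w_normal: "\<And>i l. i \<ge> 1 \<Longrightarrow> distributed M lborel (\<lambda>\<omega>. w i \<omega> $ l) (normal_density 0 c)"
    and V_normal: "\<And>q. q \<ge> 1 \<Longrightarrow> distributed M lborel (V q) (normal_density 0 c)"
    and indep: "prob_space.indep_vars M (\<lambda>_. borel)
           (\<lambda>z. case z of Inl (i, l) \<Rightarrow> (\<lambda>\<omega>. w i \<omega> $ l) | Inr q \<Rightarrow> V q)
           ({Inl (i, l) | i l. i \<ge> 1} \<union> {Inr q | q. q \<ge> 1})"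
  shows "gbp_patch M c w V (\<lambda>i. qidx J i j)"
proof -
  interpret prob_space M by (rule M)
  have qidx_pos: "qidx J i j \<ge> 1" for i
    using j by (simp add: qidx_def)
  show ?thesis
  proof
    show "inj_on (\<lambda>i. qidx J i j) {1..}"
      using j by (intro inj_onI) (auto simp: qidx_def)
    show "indep_vars (\<lambda>_. borel) (gbp_weights w V)
        ({Inl (i, m) | i m. i \<ge> 1} \<union> {Inr (qidx J i j) | i. i \<ge> 1})"
      using qidx_pos
      by (intro indep_vars_subset[OF indep[folded gbp_weights_def]]) auto
  qed (use c w_normal V_normal qidx_pos in auto)
qed

lemma matrix_vector_mult_sum_left:
  fixes A :: "'i \<Rightarrow> real^'n^'m"
  shows "(\<Sum>j\<in>S. A j) *v x = (\<Sum>j\<in>S. A j *v x)"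
  by (induct S rule: infinite_finite_induct) (simp_all add: matrix_vector_mult_add_rdistrib)

lemma mat_matrix_vector_mult: "mat (a::real) *v x = a *\<^sub>R x"
  by (simp add: vec_eq_iff matrix_vector_mult_def mat_def if_distrib if_distribR sum.delta cong: if_cong)

lemma sum_normalized_patch_vectors:
  fixes D :: "'i \<Rightarrow> real^'d^'p" and x :: "real^'d"
  assumes norm: "\<forall>j\<in>S. norm (D j *v x) = C"
    and frame: "(\<Sum>j\<in>S. transpose (D j) ** D j) = mat a"
  shows "(\<Sum>j\<in>S. (1 / norm (D j *v x)) *\<^sub>R (transpose (D j) *v (D j *v x))) = (a / C) *\<^sub>R x"
proof -
  have "(\<Sum>j\<in>S. (1 / norm (D j *v x)) *\<^sub>R (transpose (D j) *v (D j *v x)))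
      = (1 / C) *\<^sub>R ((\<Sum>j\<in>S. transpose (D j) ** D j) *v x)"
    using norm by (simp add: matrix_vector_mult_sum_left scaleR_sum_right matrix_vector_mul_assoc)
  then show ?thesis
    by (simp add: frame mat_matrix_vector_mult)
qed

lemma tendsto_sGBP:
  assumes "\<And>j. j \<in> {1..J} \<Longrightarrow>
      (\<lambda>N. (1 / real N) *\<^sub>R (\<Sum>i=1..N. (relu (V (qidx J i j) k) * ind (w i \<bullet> (D j *v x))) *\<^sub>R w i))
        \<longlonglongrightarrow> L j"
  shows "(\<lambda>N. sGBP Zt J D w V k N x) \<longlonglongrightarrow> (1 / Zt) *\<^sub>R (\<Sum>j=1..J. transpose (D j) *v L j)"
proof -
  have "sGBP Zt J D w V k N x = (1 / Zt) *\<^sub>R (\<Sum>j=1..J. transpose (D j) *v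
      ((1 / real N) *\<^sub>R (\<Sum>i=1..N. (relu (V (qidx J i j) k) * ind (w i \<bullet> (D j *v x))) *\<^sub>R w i)))" for N
  proof -
    have "1 / Zt * (1 / real N) = 1 / (Zt * real N)"
      by simp
    then show ?thesis
      unfolding sGBP_def matrix_vector_mult_scaleR scaleR_sum_right[symmetric] scaleR_scaleR by simp
  qed
  moreover have "(\<lambda>N. (1 / Zt) *\<^sub>R (\<Sum>j=1..J. transpose (D j) *v
      ((1 / real N) *\<^sub>R (\<Sum>i=1..N. (relu (V (qidx J i j) k) * ind (w i \<bullet> (D j *v x))) *\<^sub>R w i))))
      \<longlonglongrightarrow> (1 / Zt) *\<^sub>R (\<Sum>j=1..J. transpose (D j) *v L j)"
    using assms
    by (intro tendsto_scaleR tendsto_const tendsto_sum bounded_linear.tendsto[OF matrix_vector_mul_bounded_linear])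
      auto
  ultimately show ?thesis
    by simp
qed

theorem theorem1:
  fixes M :: "'a measure"
    and c Zt :: real
    and J k :: nat
    and x :: "real^'d"
    and D :: "nat \<Rightarrow> real^'d^'p"
    and w :: "nat \<Rightarrow> 'a \<Rightarrow> real^'p"
    and V :: "nat \<Rightarrow> nat \<Rightarrow> 'a \<Rightarrow> real"
  assumes M: "prob_space M"
    and c: "c > 0"
    and Zt: "Zt > 0"
    and y_nz: "\<And>j. j \<in> {1..J} \<Longrightarrow> D j *v x \<noteq> 0"
    and w_meas: "\<And>i. i \<ge> 1 \<Longrightarrow> w i \<in> borel_measurable M"
    and w_normal: "\<And>i l. i \<ge> 1 \<Longrightarrow>
           distributed M lborel (\<lambda>\<omega>. w i \<omega> $ l) (normal_density 0 c)"
    and V_normal: "\<And>q. q \<ge> 1 \<Longrightarrow> distributed M lborel (V q k) (normal_density 0 c)"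
    and indep: "prob_space.indep_vars M (\<lambda>_. borel)
           (\<lambda>z. case z of Inl (i, l) \<Rightarrow> (\<lambda>\<omega>. w i \<omega> $ l) | Inr q \<Rightarrow> V q k)
           ({Inl (i, l) | i l. i \<ge> 1} \<union> {Inr q | q. q \<ge> 1})"
  shows "(AE \<omega> in M. (\<lambda>N. sGBP Zt J D (\<lambda>i. w i \<omega>) (\<lambda>q k'. V q k' \<omega>) k N x)
            \<longlonglongrightarrow> (c\<^sup>2 / (2 * pi * Zt)) *\<^sub>R
                 (\<Sum>j=1..J. (1 / norm (D j *v x)) *\<^sub>R (transpose (D j) *v (D j *v x))))
       \<and> (\<forall>C0::real. C0 > 0 \<longrightarrow> (\<forall>j\<in>{1..J}. norm (D j *v x) = C0) \<longrightarrow>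
            (\<Sum>j=1..J. transpose (D j) ** D j) = mat (real CARD('p)) \<longrightarrow>
            (c\<^sup>2 / (2 * pi * Zt)) *\<^sub>R
                 (\<Sum>j=1..J. (1 / norm (D j *v x)) *\<^sub>R (transpose (D j) *v (D j *v x)))
              = (c\<^sup>2 * real CARD('p) / (2 * pi * C0 * Zt)) *\<^sub>R x
            \<and> (Zt = c\<^sup>2 * real CARD('p) / (2 * pi * C0) \<longrightarrow>
               (c\<^sup>2 / (2 * pi * Zt)) *\<^sub>R
                 (\<Sum>j=1..J. (1 / norm (D j *v x)) *\<^sub>R (transpose (D j) *v (D j *v x))) = x))"
proof -
  interpret prob_space M by (rule M)
  let ?L = "\<lambda>j. (c\<^sup>2 / (2 * pi * norm (D j *v x))) *\<^sub>R (D j *v x)"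
  have "AE \<omega> in M. (\<lambda>N. (1 / real N) *\<^sub>R (\<Sum>i=1..N. (relu (V (qidx J i j) k \<omega>)
      * ind (w i \<omega> \<bullet> (D j *v x))) *\<^sub>R w i \<omega>)) \<longlonglongrightarrow> ?L j" if "j \<in> {1..J}" for j
    using gbp_patch.average_tendsto[OF gbp_patch_qidx[OF M c that w_normal V_normal indep] y_nz[OF that]] .
  then have "AE \<omega> in M. \<forall>j\<in>{1..J}. (\<lambda>N. (1 / real N) *\<^sub>R (\<Sum>i=1..N. (relu (V (qidx J i j) k \<omega>)
      * ind (w i \<omega> \<bullet> (D j *v x))) *\<^sub>R w i \<omega>)) \<longlonglongrightarrow> ?L j"
    unfolding AE_finite_all[OF finite_atLeastAtMost] by blast
  then have "AE \<omega> in M. (\<lambda>N. sGBP Zt J D (\<lambda>i. w i \<omega>) (\<lambda>q k'. V q k' \<omega>) k N x)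
      \<longlonglongrightarrow> (1 / Zt) *\<^sub>R (\<Sum>j=1..J. transpose (D j) *v ?L j)"
    by eventually_elim (rule tendsto_sGBP, blast)
  moreover have "(1 / Zt) *\<^sub>R (\<Sum>j=1..J. transpose (D j) *v ?L j)
      = (c\<^sup>2 / (2 * pi * Zt)) *\<^sub>R (\<Sum>j=1..J. (1 / norm (D j *v x)) *\<^sub>R (transpose (D j) *v (D j *v x)))"
    by (simp add: scaleR_sum_right matrix_vector_mult_scaleR field_simps)
  ultimately show ?thesis
  proof (intro conjI allI impI)
    fix C0 :: real
    assume "C0 > 0" and norms: "\<forall>j\<in>{1..J}. norm (D j *v x) = C0"
      and frame: "(\<Sum>j=1..J. transpose (D j) ** D j) = mat (real CARD('p))"
    show limit: "(c\<^sup>2 / (2 * pi * Zt)) *\<^sub>R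
        (\<Sum>j=1..J. (1 / norm (D j *v x)) *\<^sub>R (transpose (D j) *v (D j *v x)))
      = (c\<^sup>2 * real CARD('p) / (2 * pi * C0 * Zt)) *\<^sub>R x"
      using sum_normalized_patch_vectors[OF norms frame] by simp
    assume "Zt = c\<^sup>2 * real CARD('p) / (2 * pi * C0)"
    then have "c\<^sup>2 * real CARD('p) / (2 * pi * C0 * Zt) = 1"
      using c \<open>C0 > 0\<close> by (simp add: field_simps)
    with limit show "(c\<^sup>2 / (2 * pi * Zt)) *\<^sub>R
        (\<Sum>j=1..J. (1 / norm (D j *v x)) *\<^sub>R (transpose (D j) *v (D j *v x))) = x"
      by simp
  qed simp
qed

end
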